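(* Let $m\ge 1$, $\bar l=(l_0,\dots,l_m)\in\mathbb{Z}_{\ge1}^{m+1}$, $L=l_0+\dots+l_m$, let $\alpha_1,\dots,\alpha_m$ be indeterminates and $\alpha_0=0$. For $j=0,1,\dots,m$ define \[ A_{\bar l,j}(t,\bar\alpha)=\sum_{i=l_j}^{L}t^{L-i}\,i!\,\sigma_i\big(\bar l,(\alpha_0-\alpha_j,\alpha_1-\alpha_j,\dots,\alpha_m-\alpha_j)\big). \] Then $\frac{1}{l_j!}A_{\bar l,j}(t,\bar\alpha)\in\mathbb{Z}[t,\alpha_1,\dots,\alpha_m]$ for all $j=0,1,\dots,m$.
   Context: For $\bar\beta=(\beta_0,\dots,\beta_m)$ the coefficients $\sigma_i(\bar l,\bar\beta)$ are defined by $\prod_{h=0}^m(\beta_h-w)^{l_h}=\sum_{i=0}^L\sigma_i(\bar l,\bar\beta)w^i$. (For $\bar\beta$ whose $j$-th coordinate is $0$, $\sigma_i=0$ for $i<l_j$.) For $j\ge1$, $A_{\bar l,j}$ is the polynomial satisfying $e^{\alpha_jt}A_{\bar l,0}(t)-A_{\bar l,j}(t)=O(t^{L+1})$ with $\deg_t A_{\bar l,j}\le L-l_j$. *)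

theory Defs
  imports "HOL-Library.Poly_Mapping" "HOL-Computational_Algebra.Polynomial"
begin

text \<open>Variable 0 plays the role of t,
  variable k (1 <= k <= m) the role of the indeterminate alpha_k.\<close>

type_synonym mpoly = "(nat \<Rightarrow>\<^sub>0 nat) \<Rightarrow>\<^sub>0 rat"

definition mvar :: "nat \<Rightarrow> mpoly" where
  "mvar k = Poly_Mapping.single (Poly_Mapping.single k 1) 1"

definition mconst :: "rat \<Rightarrow> mpoly" where
  "mconst c = Poly_Mapping.single 0 c"

definition int_coeffs :: "mpoly \<Rightarrow> bool" where
  "int_coeffs P \<longleftrightarrow> (\<forall>\<mu>. Poly_Mapping.lookup P \<mu> \<in> \<int>)"

definition alpha :: "nat \<Rightarrow> mpoly" where
  "alpha k = (if k = 0 then 0 else mvar k)"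

definition sigma :: "nat \<Rightarrow> (nat \<Rightarrow> nat) \<Rightarrow> (nat \<Rightarrow> mpoly) \<Rightarrow> nat \<Rightarrow> mpoly" where
  "sigma m l beta i = coeff (\<Prod>h\<le>m. [:beta h, -1:] ^ l h) i"

definition Ltot :: "nat \<Rightarrow> (nat \<Rightarrow> nat) \<Rightarrow> nat" where
  "Ltot m l = (\<Sum>h\<le>m. l h)"

definition A_poly :: "nat \<Rightarrow> (nat \<Rightarrow> nat) \<Rightarrow> nat \<Rightarrow> mpoly" where
  "A_poly m l j = (\<Sum>i = l j..Ltot m l.
      mvar 0 ^ (Ltot m l - i) * of_nat (fact i) * sigma m l (\<lambda>h. alpha h - alpha j) i)"

end

theory Submission
  imports Defs
begin

text \<open>Every \<open>\<sigma>\<^sub>i\<close> evaluated at the differences \<open>\<alpha>\<^sub>h - \<alpha>\<^sub>j\<close> is a coefficient of a product of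
  polynomials with integer coefficients, hence itself has integer coefficients; and the summand
  of index \<open>i \<ge> l\<^sub>j\<close> carries the factor \<open>i!\<close>, which \<open>l\<^sub>j!\<close> divides.\<close>

lemma Sum_any_Ints: "(\<And>x. f x \<in> \<int>) \<Longrightarrow> Sum_any f \<in> (\<int> :: 'a :: ring_1 set)"
  unfolding Sum_any.expand_set by (rule Ints_sum) auto

lemma int_coeffs_mult: "int_coeffs p \<Longrightarrow> int_coeffs q \<Longrightarrow> int_coeffs (p * q)"
  unfolding int_coeffs_def lookup_mult
  by (intro allI Sum_any_Ints Ints_mult) (auto simp: when_def)

lemma int_coeffs_diff: "int_coeffs p \<Longrightarrow> int_coeffs q \<Longrightarrow> int_coeffs (p - q)"
  unfolding int_coeffs_def lookup_minus by auto

lemma int_coeffs_uminus: "int_coeffs p \<Longrightarrow> int_coeffs (- p)"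
  unfolding int_coeffs_def by auto

lemma int_coeffs_0: "int_coeffs 0"
  unfolding int_coeffs_def by auto

lemma int_coeffs_1: "int_coeffs 1"
  unfolding int_coeffs_def lookup_one by (auto simp: when_def)

lemma int_coeffs_mconst: "c \<in> \<int> \<Longrightarrow> int_coeffs (mconst c)"
  unfolding int_coeffs_def mconst_def lookup_single by (auto simp: when_def)

lemma int_coeffs_mvar: "int_coeffs (mvar k)"
  unfolding int_coeffs_def mvar_def lookup_single by (auto simp: when_def)

lemma int_coeffs_alpha: "int_coeffs (alpha k)"
  unfolding alpha_def by (simp add: int_coeffs_0 int_coeffs_mvar)

lemma int_coeffs_power: "int_coeffs p \<Longrightarrow> int_coeffs (p ^ n)"
  by (induction n) (auto intro: int_coeffs_mult int_coeffs_1)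

lemma int_coeffs_sum: "(\<And>i. i \<in> A \<Longrightarrow> int_coeffs (f i)) \<Longrightarrow> int_coeffs (sum f A)"
  unfolding int_coeffs_def lookup_sum by (auto intro: Ints_sum)

definition poly_int_coeffs :: "mpoly poly \<Rightarrow> bool" where
  "poly_int_coeffs p \<longleftrightarrow> (\<forall>i. int_coeffs (coeff p i))"

lemma poly_int_coeffs_mult:
  "poly_int_coeffs p \<Longrightarrow> poly_int_coeffs q \<Longrightarrow> poly_int_coeffs (p * q)"
  unfolding poly_int_coeffs_def coeff_mult by (auto intro!: int_coeffs_sum int_coeffs_mult)

lemma poly_int_coeffs_1: "poly_int_coeffs 1"
  unfolding poly_int_coeffs_def coeff_1 by (auto intro: int_coeffs_0 int_coeffs_1)

lemma poly_int_coeffs_power: "poly_int_coeffs p \<Longrightarrow> poly_int_coeffs (p ^ n)"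
  by (induction n) (auto intro: poly_int_coeffs_mult poly_int_coeffs_1)

lemma poly_int_coeffs_prod:
  "(\<And>h. h \<in> A \<Longrightarrow> poly_int_coeffs (f h)) \<Longrightarrow> poly_int_coeffs (prod f A)"
  by (induction A rule: infinite_finite_induct)
     (auto intro: poly_int_coeffs_mult poly_int_coeffs_1)

lemma poly_int_coeffs_linear: "int_coeffs a \<Longrightarrow> poly_int_coeffs [:a, -1:]"
  unfolding poly_int_coeffs_def
  by (auto simp: coeff_pCons split: nat.split
           intro: int_coeffs_0 int_coeffs_uminus int_coeffs_1)

lemma int_coeffs_sigma:
  assumes "\<And>h. h \<le> m \<Longrightarrow> int_coeffs (beta h)"
  shows "int_coeffs (sigma m l beta i)"
proof -
  have "poly_int_coeffs (\<Prod>h\<le>m. [:beta h, -1:] ^ l h)"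
    using assms by (intro poly_int_coeffs_prod poly_int_coeffs_power poly_int_coeffs_linear) auto
  then show ?thesis
    unfolding sigma_def poly_int_coeffs_def by auto
qed

lemma mconst_mult_of_nat: "mconst c * of_nat n = mconst (c * of_nat n)"
  unfolding mconst_def by (metis mult_single single_of_nat add_0)

lemma fact_div_fact_Ints: "k \<le> i \<Longrightarrow> fact i / fact k \<in> (\<int> :: 'a :: field_char_0 set)"
proof -
  assume "k \<le> i"
  then have "(fact k :: nat) dvd fact i" by (rule fact_dvd)
  then obtain q where "fact i = fact k * (q :: nat)" ..
  then have "(fact i :: 'a) = fact k * of_nat q"
    by (metis of_nat_fact of_nat_mult)
  then show ?thesis by simp
qed

theorem lemma4p3:
  fixes m :: nat and l :: "nat \<Rightarrow> nat" and j :: nat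
  assumes "m \<ge> 1"
    and "\<forall>h\<le>m. l h \<ge> 1"
    and "j \<le> m"
  shows "int_coeffs (mconst (1 / of_nat (fact (l j))) * A_poly m l j)"
proof -
  define c where "c i = mconst (1 / of_nat (fact (l j)) * of_nat (fact i))" for i
  have "mconst (1 / of_nat (fact (l j))) * A_poly m l j =
    (\<Sum>i = l j..Ltot m l. mvar 0 ^ (Ltot m l - i) * c i * sigma m l (\<lambda>h. alpha h - alpha j) i)"
    unfolding A_poly_def sum_distrib_left c_def mconst_mult_of_nat[symmetric]
    by (simp add: ac_simps)
  moreover have "int_coeffs (c i)" if "i \<in> {l j..Ltot m l}" for i
    using that unfolding c_def by (auto intro: int_coeffs_mconst fact_div_fact_Ints)
  ultimately show ?thesis
    by (auto intro!: int_coeffs_sum int_coeffs_mult int_coeffs_power int_coeffs_mvar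
                     int_coeffs_sigma int_coeffs_diff int_coeffs_alpha)
qed

end
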